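(* Let $k\ge1$ and assume $\mathbb{E}[m_0^{r_k+\varepsilon}]<\infty$ for some $\varepsilon>0$. Let $(k_n)$ be positive numbers with $k_n\to\infty$ and $k_n/e^{\theta n}\to0$ for every $\theta>0$. Then $$\lim_{n\to\infty}\frac1n\log\mathbb{P}_k(Z_n\le k_n)=\log\gamma_k.$$
   Context: Branching process in a random environment (BPRE). The environment $\xi=(\xi_0,\xi_1,\dots)$ is i.i.d.; each $\xi_n$ determines an offspring distribution $(p_i(\xi_n))_{i\ge0}$ with generating function $f_n$. $Z_{n+1}=\sum_{i=1}^{Z_n}N_{n,i}$, where conditionally on $\xi$ the $N_{n,i}$ are independent with generating function $f_n$. $\mathbb{P}_k$ is the annealed law with $Z_0=k$. $m_0=\sum_i i\,p_i(\xi_0)$. Standing assumptions: $p_0(\xi_0)=0$ a.s.; $\mathbb{E}\log m_0\in(0,\infty)$; $\mathbb{E}[\frac{Z_1}{m_0}\log^+Z_1]<\infty$ (with $Z_0=1$); $\mathbb{P}(p_1(\xi_0)>0)>0$. $\gamma_k=\mathbb{P}_k(Z_1=k)=\mathbb{E}[p_1(\xi_0)^k]$; $r_k\in(0,\infty)$ is the solution of $\mathbb{E}[m_0^{-r_k}]=\gamma_k$ (assumed to exist). *)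

theory Defs
  imports "HOL-Probability.Probability"
begin

text \<open>Branching process in a random environment. An environment state e (drawn from
  the probability space M) determines the offspring distribution p e :: nat pmf,
  i.e. p_i(e) = pmf (p e) i.\<close>

fun sum_iid :: "nat pmf \<Rightarrow> nat \<Rightarrow> nat pmf" where
  "sum_iid q 0 = return_pmf 0"
| "sum_iid q (Suc j) = bind_pmf q (\<lambda>a. map_pmf (\<lambda>b. a + b) (sum_iid q j))"

text \<open>Quenched law of Z_n given the environment sequence xi and Z_0 = k:
  conditionally on xi, Z_{n+1} is the sum of Z_n i.i.d. variables with law p (xi n).\<close>
fun quenched_law :: "('e \<Rightarrow> nat pmf) \<Rightarrow> (nat \<Rightarrow> 'e) \<Rightarrow> nat \<Rightarrow> nat \<Rightarrow> nat pmf" where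
  "quenched_law p xi k 0 = return_pmf k"
| "quenched_law p xi k (Suc n) = bind_pmf (quenched_law p xi k n) (sum_iid (p (xi n)))"

definition annealed_prob :: "'e measure \<Rightarrow> ('e \<Rightarrow> nat pmf) \<Rightarrow> nat \<Rightarrow> nat \<Rightarrow> nat set \<Rightarrow> real" where
  "annealed_prob M p k n A =
     (\<integral>xi. measure_pmf.prob (quenched_law p xi k n) A \<partial>(PiM UNIV (\<lambda>_::nat. M)))"

definition mean_offspring :: "('e \<Rightarrow> nat pmf) \<Rightarrow> 'e \<Rightarrow> real" where
  "mean_offspring p e = measure_pmf.expectation (p e) real"

text \<open>gamma_k = P_k(Z_1 = k) = E[p_1(xi_0)^k].\<close>
definition gamma_k :: "'e measure \<Rightarrow> ('e \<Rightarrow> nat pmf) \<Rightarrow> nat \<Rightarrow> real" where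
  "gamma_k M p k = (\<integral>e. (pmf (p e) 1) ^ k \<partial>M)"

end

theory Submission
  imports Defs
begin

text \<open>The event \<open>Z\<^sub>n \<le> k\<^sub>n\<close> contains the event that every individual has exactly one child in
  each generation, which has probability \<open>\<gamma>\<^sub>k\<^sup>n\<close>; this gives the lower bound. For the upper bound,
  Markov's inequality gives \<open>P\<^sub>k(Z\<^sub>n \<le> x) \<le> x\<^sup>s E\<^sub>k[Z\<^sub>n\<^sup>-\<^sup>s]\<close>. Conditioning on the first generation, and
  bounding the negative moment of a sum of \<open>j \<ge> k\<close> i.i.d. offspring numbers by AM-GM and the power
  mean inequality, yields \<open>E\<^sub>k[Z\<^sub>n\<^sup>-\<^sup>s] \<le> k\<^sup>-\<^sup>s \<rho>(s)\<^sup>n\<close> with \<open>\<rho>(s) = E[(E[N\<^sup>-\<^sup>s\<^sup>/\<^sup>k | \<xi>\<^sub>0])\<^sup>k]\<close>.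
  As \<open>s \<rightarrow> \<infinity>\<close>, \<open>E[N\<^sup>-\<^sup>s\<^sup>/\<^sup>k | \<xi>\<^sub>0] \<rightarrow> p\<^sub>1(\<xi>\<^sub>0)\<close>, so \<open>\<rho>(s) \<rightarrow> \<gamma>\<^sub>k\<close>, while the factor \<open>k\<^sub>n\<^sup>s\<close> is
  subexponential for each fixed \<open>s\<close>.\<close>

section \<open>Sums of i.i.d. offspring numbers and the quenched law\<close>

lemma set_pmf_sum_iid_ge:
  assumes "0 \<notin> set_pmf q"
  shows "set_pmf (sum_iid q j) \<subseteq> {j..}"
proof (induction j)
  case (Suc j)
  have "\<And>a. a \<in> set_pmf q \<Longrightarrow> a \<ge> 1" using assms by (metis less_one not_le)
  with Suc show ?case by (auto simp: set_bind_pmf) fastforce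
qed simp

lemma set_pmf_quenched_law_ge:
  assumes "\<And>i. 0 \<notin> set_pmf (p (xi i))"
  shows "set_pmf (quenched_law p xi j n) \<subseteq> {j..}"
proof (induction n)
  case (Suc n)
  show ?case using Suc set_pmf_sum_iid_ge[OF assms] by (auto simp: set_bind_pmf) fastforce
qed simp

lemma quenched_law_Suc_case_nat:
  "quenched_law p (case_nat e \<omega>) j (Suc n) = bind_pmf (sum_iid (p e) j) (\<lambda>l. quenched_law p \<omega> l n)"
proof (induction n)
  case 0 then show ?case by (simp add: bind_return_pmf bind_return_pmf')
next
  case (Suc n)
  show ?case by (subst quenched_law.simps, subst Suc) (simp add: bind_assoc_pmf)
qed

lemma pmf_map_add_left:
  fixes S :: "nat pmf"
  shows "pmf (map_pmf (\<lambda>b. a + b) S) z = (if a \<le> z then pmf S (z - a) else 0)"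
proof -
  have "(\<lambda>b. a + b) -` {z} = (if a \<le> z then {z - a} else {})" by (auto split: if_splits)
  then show ?thesis by (simp add: pmf_map measure_pmf_single)
qed

lemma pmf_sum_iid_Suc:
  "pmf (sum_iid q (Suc j)) z = (\<Sum>a\<le>z. pmf q a * pmf (sum_iid q j) (z - a))"
proof -
  have "ennreal (pmf (sum_iid q (Suc j)) z)
      = (\<integral>\<^sup>+a. pmf (map_pmf (\<lambda>b. a + b) (sum_iid q j)) z \<partial>measure_pmf q)"
    by (simp add: ennreal_pmf_bind)
  also have "\<dots> = (\<Sum>a\<in>{..z}. ennreal (pmf (map_pmf (\<lambda>b. a + b) (sum_iid q j)) z) * pmf q a)"
    by (rule nn_integral_measure_pmf_support) (auto simp: pmf_map_add_left)
  also have "\<dots> = ennreal (\<Sum>a\<le>z. pmf q a * pmf (sum_iid q j) (z - a))"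
    by (simp add: pmf_map_add_left ennreal_mult'' sum_ennreal[symmetric] mult.commute del: sum_ennreal)
  finally show ?thesis by (simp add: sum_nonneg)
qed

lemma pmf_sum_iid_diag_ge: "pmf q 1 ^ j \<le> pmf (sum_iid q j) j"
proof (induction j)
  case (Suc j)
  have "pmf q 1 ^ Suc j \<le> pmf q 1 * pmf (sum_iid q j) (Suc j - 1)"
    using Suc by (simp add: mult_left_mono)
  also have "\<dots> \<le> (\<Sum>a\<le>Suc j. pmf q a * pmf (sum_iid q j) (Suc j - a))"
    by (rule member_le_sum[where f="\<lambda>a. pmf q a * pmf (sum_iid q j) (Suc j - a)"]) auto
  finally show ?case by (simp only: pmf_sum_iid_Suc)
qed simp

lemma pmf_times_le_nn_integral:
  "ennreal (pmf Q a) * f a \<le> (\<integral>\<^sup>+l. f l \<partial>measure_pmf Q)"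
proof -
  have "(\<integral>\<^sup>+l. f a * indicator {a} l \<partial>measure_pmf Q) \<le> (\<integral>\<^sup>+l. f l \<partial>measure_pmf Q)"
    by (intro nn_integral_mono) (auto split: split_indicator)
  then show ?thesis by (simp add: nn_integral_cmult_indicator emeasure_pmf_single mult.commute)
qed

lemma nn_integral_measure_pmf_swap:
  fixes Q :: "nat pmf"
  assumes "\<And>l. (\<lambda>x. h x l) \<in> borel_measurable N"
  shows "(\<integral>\<^sup>+x. \<integral>\<^sup>+l. h x l \<partial>measure_pmf Q \<partial>N) = (\<integral>\<^sup>+l. \<integral>\<^sup>+x. h x l \<partial>N \<partial>measure_pmf Q)"
proof -
  have "(\<integral>\<^sup>+x. \<integral>\<^sup>+l. h x l \<partial>measure_pmf Q \<partial>N) = (\<integral>\<^sup>+x. (\<Sum>l. ennreal (pmf Q l) * h x l) \<partial>N)"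
    by (simp add: nn_integral_measure_pmf nn_integral_count_space_nat)
  also have "\<dots> = (\<Sum>l. \<integral>\<^sup>+x. ennreal (pmf Q l) * h x l \<partial>N)"
    using assms by (intro nn_integral_suminf) measurable
  also have "\<dots> = (\<Sum>l. ennreal (pmf Q l) * \<integral>\<^sup>+x. h x l \<partial>N)"
    using assms by (simp add: nn_integral_cmult)
  also have "\<dots> = (\<integral>\<^sup>+l. \<integral>\<^sup>+x. h x l \<partial>N \<partial>measure_pmf Q)"
    by (simp add: nn_integral_measure_pmf nn_integral_count_space_nat)
  finally show ?thesis .
qed

lemma (in prob_space) nn_integral_PiM_case_nat:
  assumes f[measurable]: "f \<in> borel_measurable (PiM UNIV (\<lambda>_::nat. M))"
  shows "(\<integral>\<^sup>+X. f X \<partial>PiM UNIV (\<lambda>_::nat. M))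
       = (\<integral>\<^sup>+x. \<integral>\<^sup>+X. f (case_nat x X) \<partial>PiM UNIV (\<lambda>_::nat. M) \<partial>M)"
proof -
  interpret S: sequence_space M ..
  interpret P: pair_sigma_finite M "\<Pi>\<^sub>M i::nat\<in>UNIV. M" ..
  have "(\<integral>\<^sup>+X. f X \<partial>S.S) = (\<integral>\<^sup>+X. f ((\<lambda>(s, \<omega>). case_nat s \<omega>) X) \<partial>(M \<Otimes>\<^sub>M S.S))"
    by (subst S.PiM_iter[symmetric]) (simp add: nn_integral_distr)
  also have "\<dots> = (\<integral>\<^sup>+x. \<integral>\<^sup>+X. f ((\<lambda>(s, \<omega>). case_nat s \<omega>) (x, X)) \<partial>S.S \<partial>M)"
    by (subst S.nn_integral_fst) simp_all
  finally show ?thesis by simp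
qed

lemma borel_measurable_nn_integral_pmf:
  fixes Q :: "'a \<Rightarrow> nat pmf"
  assumes "\<And>z. (\<lambda>x. pmf (Q x) z) \<in> borel_measurable N"
    and "\<And>z. (\<lambda>x. h x z) \<in> borel_measurable N"
  shows "(\<lambda>x. \<integral>\<^sup>+z. h x z \<partial>measure_pmf (Q x)) \<in> borel_measurable N"
proof -
  have "(\<lambda>x. \<integral>\<^sup>+z. h x z \<partial>measure_pmf (Q x)) = (\<lambda>x. \<Sum>z. ennreal (pmf (Q x) z) * h x z)"
    by (simp add: nn_integral_measure_pmf nn_integral_count_space_nat)
  also have "\<dots> \<in> borel_measurable N" using assms by measurable
  finally show ?thesis .
qed

lemma borel_measurable_pmf_sum_iid:
  assumes "\<And>i. (\<lambda>x. pmf (q x) i) \<in> borel_measurable N"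
  shows "(\<lambda>x. pmf (sum_iid (q x) j) z) \<in> borel_measurable N"
proof (induction j arbitrary: z)
  case (Suc j)
  show ?case unfolding pmf_sum_iid_Suc using Suc assms by measurable
qed (simp add: pmf_return)

lemma borel_measurable_pmf_quenched_law:
  assumes "\<And>i. (\<lambda>e. pmf (p e) i) \<in> borel_measurable M"
  shows "(\<lambda>xi. pmf (quenched_law p xi j n) z) \<in> borel_measurable (PiM UNIV (\<lambda>_::nat. M))"
proof (induction n arbitrary: z)
  case (Suc n)
  have step: "\<And>i. (\<lambda>xi. pmf (p (xi n)) i) \<in> borel_measurable (PiM UNIV (\<lambda>_::nat. M))"
    using assms by measurable
  have "(\<lambda>xi. pmf (quenched_law p xi j (Suc n)) z) = (\<lambda>xi. enn2real
      (\<integral>\<^sup>+l. ennreal (pmf (sum_iid (p (xi n)) l) z) \<partial>measure_pmf (quenched_law p xi j n)))"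
    by (simp add: ennreal_pmf_bind[symmetric])
  then show ?case
    by (simp only:) (intro borel_measurable_enn2real borel_measurable_nn_integral_pmf Suc
        measurable_compose[OF borel_measurable_pmf_sum_iid[OF step] measurable_ennreal])
qed (simp add: pmf_return)

lemma borel_measurable_nn_integral_quenched_law:
  assumes "\<And>i. (\<lambda>e. pmf (p e) i) \<in> borel_measurable M"
  shows "(\<lambda>xi. \<integral>\<^sup>+z. f z \<partial>measure_pmf (quenched_law p xi j n))
           \<in> borel_measurable (PiM UNIV (\<lambda>_::nat. M))"
  by (intro borel_measurable_nn_integral_pmf borel_measurable_pmf_quenched_law assms) simp

section \<open>Negative moments\<close>

definition neg_moment :: "nat pmf \<Rightarrow> real \<Rightarrow> real" where
  "neg_moment q t = measure_pmf.expectation q (\<lambda>i. real i powr (-t))"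

lemma nat_powr_neg_le_1: "t \<ge> 0 \<Longrightarrow> real i powr (-t) \<le> 1"
proof (cases "i = 0")
  case False
  assume t: "t \<ge> 0"
  have "1 \<le> real i powr t" using False t by (intro ge_one_powr_ge_zero) auto
  then show ?thesis by (simp add: powr_minus inverse_le_1_iff)
qed auto

lemma integrable_nat_powr_neg: "t \<ge> 0 \<Longrightarrow> integrable (measure_pmf q) (\<lambda>i. real i powr (-t))"
  by (rule measure_pmf.integrable_const_bound[where B=1]) (auto simp: nat_powr_neg_le_1)

lemma neg_moment_nonneg: "0 \<le> neg_moment q t"
  unfolding neg_moment_def by (simp add: integral_nonneg_AE)

lemma neg_moment_le_1: "t \<ge> 0 \<Longrightarrow> neg_moment q t \<le> 1"
proof -
  assume t: "t \<ge> 0"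
  have "neg_moment q t \<le> measure_pmf.expectation q (\<lambda>i. 1::real)"
    unfolding neg_moment_def using t
    by (intro integral_mono integrable_nat_powr_neg) (auto simp: nat_powr_neg_le_1)
  then show ?thesis by simp
qed

lemma nn_integral_nat_powr_neg:
  "t \<ge> 0 \<Longrightarrow> (\<integral>\<^sup>+i. ennreal (real i powr (-t)) \<partial>measure_pmf q) = ennreal (neg_moment q t)"
  unfolding neg_moment_def by (intro nn_integral_eq_integral integrable_nat_powr_neg) auto

lemma borel_measurable_neg_moment:
  assumes "\<And>i. (\<lambda>e. pmf (p e) i) \<in> borel_measurable M" and "t \<ge> 0"
  shows "(\<lambda>e. neg_moment (p e) t) \<in> borel_measurable M"
proof -
  have "(\<lambda>e. neg_moment (p e) t) = (\<lambda>e. enn2real (\<integral>\<^sup>+i. ennreal (real i powr (-t)) \<partial>measure_pmf (p e)))"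
    using assms(2) by (simp add: nn_integral_nat_powr_neg neg_moment_nonneg)
  also have "\<dots> \<in> borel_measurable M"
    by (intro borel_measurable_enn2real borel_measurable_nn_integral_pmf assms(1)) simp
  finally show ?thesis .
qed

text \<open>Young's inequality with weights \<open>1/(j+1)\<close> and \<open>j/(j+1)\<close>, raised to the power \<open>-s\<close>.\<close>

lemma powr_neg_weighted_mean_le:
  fixes a b j s :: real
  assumes "a \<ge> 1" "b \<ge> j" "j \<ge> 1" "s \<ge> 0"
  shows "((a + b) / (j + 1)) powr (-s) \<le> a powr (-s / (j+1)) * (b / j) powr (-(s * j / (j+1)))"
proof -
  have "a powr (1/(j+1)) * (b/j) powr (j/(j+1)) \<le> (1/(j+1)) * a + (j/(j+1)) * (b/j)"
    using assms by (intro Youngs_inequality_0) (auto simp: field_simps)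
  also have "\<dots> = (a + b) / (j + 1)" using assms by (simp add: add_divide_distrib)
  finally have young: "a powr (1/(j+1)) * (b/j) powr (j/(j+1)) \<le> (a + b) / (j + 1)" .
  have "((a + b) / (j + 1)) powr (-s) \<le> (a powr (1/(j+1)) * (b/j) powr (j/(j+1))) powr (-s)"
    using young assms by (intro powr_mono2') auto
  also have "\<dots> = a powr (-s / (j+1)) * (b / j) powr (-(s * j / (j+1)))"
    using assms by (simp add: powr_mult powr_powr field_simps)
  finally show ?thesis .
qed

lemma nn_integral_sum_iid_mean_powr_neg_le:
  assumes q0: "0 \<notin> set_pmf q" and "s \<ge> 0"
  shows "(\<integral>\<^sup>+z. ennreal ((real z / real (Suc m)) powr (-s)) \<partial>measure_pmf (sum_iid q (Suc m)))
          \<le> ennreal (neg_moment q (s / real (Suc m)) ^ Suc m)"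
  using \<open>s \<ge> 0\<close>
proof (induction m arbitrary: s)
  case 0
  then show ?case
    by (simp add: bind_return_pmf' map_pmf_def[symmetric] nn_integral_nat_powr_neg)
next
  case (Suc m)
  define j where "j = real (Suc m)"
  let ?Q = "measure_pmf (sum_iid q (Suc m))"
  have j1: "j \<ge> 1" by (simp add: j_def)
  have "(\<integral>\<^sup>+z. ennreal ((real z / real (Suc (Suc m))) powr (-s)) \<partial>measure_pmf (sum_iid q (Suc (Suc m))))
      = (\<integral>\<^sup>+a. \<integral>\<^sup>+b. ennreal (((real a + real b) / (j + 1)) powr (-s)) \<partial>?Q \<partial>measure_pmf q)"
    by (subst sum_iid.simps(2)) (simp add: j_def add.commute del: sum_iid.simps)
  also have "\<dots> \<le> (\<integral>\<^sup>+a. \<integral>\<^sup>+b. ennreal (real a powr (-s / (j+1)))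
                   * ennreal ((real b / j) powr (-(s * j / (j+1)))) \<partial>?Q \<partial>measure_pmf q)"
  proof (intro nn_integral_mono_AE, unfold AE_measure_pmf_iff, intro ballI nn_integral_mono_AE,
      unfold AE_measure_pmf_iff, intro ballI)
    fix a b assume a: "a \<in> set_pmf q" and b: "b \<in> set_pmf (sum_iid q (Suc m))"
    have "real a \<ge> 1" using a q0 by (metis less_one not_le of_nat_1 of_nat_le_iff)
    moreover have "real b \<ge> j"
      using b set_pmf_sum_iid_ge[OF q0, of "Suc m"] unfolding j_def by (auto simp del: sum_iid.simps)
    ultimately have "((real a + real b) / (j + 1)) powr (-s)
        \<le> real a powr (-s / (j+1)) * (real b / j) powr (-(s * j / (j+1)))"
      using Suc.prems j1 by (intro powr_neg_weighted_mean_le)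
    then show "ennreal (((real a + real b) / (j + 1)) powr (-s))
        \<le> ennreal (real a powr (-s / (j+1))) * ennreal ((real b / j) powr (-(s * j / (j+1))))"
      by (simp add: ennreal_mult''[symmetric])
  qed
  also have "\<dots> = (\<integral>\<^sup>+a. ennreal (real a powr (-s / (j+1))) \<partial>measure_pmf q)
                 * (\<integral>\<^sup>+b. ennreal ((real b / j) powr (-(s * j / (j+1)))) \<partial>?Q)"
    by (simp add: nn_integral_cmult nn_integral_multc del: sum_iid.simps)
  also have "\<dots> \<le> ennreal (neg_moment q (s / (j+1))) * ennreal (neg_moment q (s / (j+1)) ^ Suc m)"
  proof -
    have "s * j / (j+1) / j = s / (j+1)" using j1 by (simp add: divide_simps)
    then show ?thesis
      using Suc.IH[of "s * j / (j+1)"] Suc.prems j1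
      by (intro mult_mono) (auto simp: j_def nn_integral_nat_powr_neg simp del: sum_iid.simps)
  qed
  finally show ?case
    by (simp add: j_def add.commute ennreal_mult'' neg_moment_nonneg)
qed

text \<open>Jensen for the convex map \<open>x \<mapsto> x powr (j/k)\<close>.\<close>

lemma neg_moment_power_mono:
  assumes q0: "0 \<notin> set_pmf q" and s: "s > 0" and k: "1 \<le> k" "k \<le> j"
  shows "neg_moment q (s / real j) ^ j \<le> neg_moment q (s / real k) ^ k"
proof -
  define a where "a = s / real j"
  define r where "r = real j / real k"
  have a: "a > 0" and r: "r \<ge> 1" using s k by (simp_all add: a_def r_def)
  have q1: "\<And>i. i \<in> set_pmf q \<Longrightarrow> real i > 0" using q0 by (metis gr0I of_nat_0_less_iff)
  have "(neg_moment q a) powr r \<le> measure_pmf.expectation q (\<lambda>i. (real i powr (-a)) powr r)"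
    unfolding neg_moment_def
  proof (rule measure_pmf.jensens_inequality[where I="{0<..}" and a=0])
    show "integrable (measure_pmf q) (\<lambda>x. (real x powr - a) powr r)"
      using a r by (simp add: powr_powr) (intro integrable_nat_powr_neg, simp)
  qed (use a q1 powr_convex[OF r] in \<open>auto simp: AE_measure_pmf_iff integrable_nat_powr_neg\<close>)
  also have "\<dots> = neg_moment q (s / real k)"
    using k by (simp add: neg_moment_def powr_powr a_def r_def)
  finally have jensen: "(neg_moment q a) powr r \<le> neg_moment q (s / real k)" .
  show ?thesis
  proof (cases "neg_moment q a = 0")
    case True
    then show ?thesis using k by (simp add: a_def zero_power neg_moment_nonneg)
  next
    case False
    then have pos: "neg_moment q a > 0" using neg_moment_nonneg[of q a] by simp
    have "neg_moment q a ^ j = ((neg_moment q a) powr r) ^ k"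
      using pos k by (simp add: powr_realpow[symmetric] powr_powr r_def)
    also have "\<dots> \<le> neg_moment q (s / real k) ^ k" using jensen by (intro power_mono) auto
    finally show ?thesis by (simp add: a_def)
  qed
qed

lemma nn_integral_sum_iid_powr_neg_le:
  assumes q0: "0 \<notin> set_pmf q" and s: "s > 0" and k: "1 \<le> k" "k \<le> j"
  shows "(\<integral>\<^sup>+z. ennreal (real z powr (-s)) \<partial>measure_pmf (sum_iid q j))
          \<le> ennreal (real j powr (-s)) * ennreal (neg_moment q (s / real k) ^ k)"
proof -
  obtain m where m: "j = Suc m" using k by (cases j) auto
  have "(\<integral>\<^sup>+z. ennreal (real z powr (-s)) \<partial>measure_pmf (sum_iid q j))
      = (\<integral>\<^sup>+z. ennreal (real j powr (-s)) * ennreal ((real z / real j) powr (-s)) \<partial>measure_pmf (sum_iid q j))"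
    using k by (intro nn_integral_cong) (simp add: ennreal_mult''[symmetric] powr_divide)
  also have "\<dots> = ennreal (real j powr (-s))
                  * (\<integral>\<^sup>+z. ennreal ((real z / real j) powr (-s)) \<partial>measure_pmf (sum_iid q j))"
    by (simp add: nn_integral_cmult)
  also have "\<dots> \<le> ennreal (real j powr (-s)) * ennreal (neg_moment q (s / real j) ^ j)"
    using nn_integral_sum_iid_mean_powr_neg_le[OF q0, of s m] s m by (intro mult_left_mono) auto
  also have "\<dots> \<le> ennreal (real j powr (-s)) * ennreal (neg_moment q (s / real k) ^ k)"
    by (intro mult_left_mono ennreal_leI neg_moment_power_mono[OF q0 s k]) auto
  finally show ?thesis .
qed

section \<open>Annealed expectations\<close>

lemma gamma_k_nonneg: "0 \<le> gamma_k M p k"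
  unfolding gamma_k_def by (intro integral_nonneg_AE) auto

definition annealed_nn_integral ::
    "'e measure \<Rightarrow> ('e \<Rightarrow> nat pmf) \<Rightarrow> (nat \<Rightarrow> ennreal) \<Rightarrow> nat \<Rightarrow> nat \<Rightarrow> ennreal" where
  "annealed_nn_integral M p f j n =
     (\<integral>\<^sup>+xi. \<integral>\<^sup>+z. f z \<partial>measure_pmf (quenched_law p xi j n) \<partial>PiM UNIV (\<lambda>_::nat. M))"

context prob_space
begin

lemma annealed_nn_integral_0: "annealed_nn_integral M p f j 0 = f j"
proof -
  interpret S: prob_space "PiM UNIV (\<lambda>_::nat. M)" by (intro prob_space_PiM prob_space_axioms)
  show ?thesis by (simp add: annealed_nn_integral_def S.emeasure_space_1)
qed

lemma annealed_nn_integral_Suc: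
  assumes pm: "\<And>i. (\<lambda>e. pmf (p e) i) \<in> borel_measurable M"
  shows "annealed_nn_integral M p f j (Suc n)
       = (\<integral>\<^sup>+e. \<integral>\<^sup>+l. annealed_nn_integral M p f l n \<partial>measure_pmf (sum_iid (p e) j) \<partial>M)"
proof -
  let ?S = "PiM UNIV (\<lambda>_::nat. M)"
  let ?U = "\<lambda>\<omega> l. \<integral>\<^sup>+z. f z \<partial>measure_pmf (quenched_law p \<omega> l n)"
  have "annealed_nn_integral M p f j (Suc n)
      = (\<integral>\<^sup>+e. \<integral>\<^sup>+\<omega>. \<integral>\<^sup>+z. f z \<partial>measure_pmf (quenched_law p (case_nat e \<omega>) j (Suc n)) \<partial>?S \<partial>M)"
    unfolding annealed_nn_integral_def
    by (intro nn_integral_PiM_case_nat borel_measurable_nn_integral_quenched_law pm)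
  also have "\<dots> = (\<integral>\<^sup>+e. \<integral>\<^sup>+\<omega>. \<integral>\<^sup>+l. ?U \<omega> l \<partial>measure_pmf (sum_iid (p e) j) \<partial>?S \<partial>M)"
    by (simp only: quenched_law_Suc_case_nat nn_integral_bind_pmf)
  also have "\<dots> = (\<integral>\<^sup>+e. \<integral>\<^sup>+l. \<integral>\<^sup>+\<omega>. ?U \<omega> l \<partial>?S \<partial>measure_pmf (sum_iid (p e) j) \<partial>M)"
    by (intro nn_integral_cong nn_integral_measure_pmf_swap
        borel_measurable_nn_integral_quenched_law pm)
  finally show ?thesis unfolding annealed_nn_integral_def .
qed

lemma annealed_nn_integral_mono:
  assumes good: "AE e in M. 0 \<notin> set_pmf (p e)" and le: "\<And>z. j \<le> z \<Longrightarrow> f z \<le> h z"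
  shows "annealed_nn_integral M p f j n \<le> annealed_nn_integral M p h j n"
proof -
  have "AE xi in PiM UNIV (\<lambda>_::nat. M). \<forall>i. 0 \<notin> set_pmf (p (xi i))"
    unfolding AE_all_countable using good by (intro allI AE_PiM_component) (auto intro: prob_space_axioms)
  then show ?thesis
    unfolding annealed_nn_integral_def
  proof (intro nn_integral_mono_AE, eventually_elim)
    case (elim xi)
    show ?case
      using le set_pmf_quenched_law_ge[of p xi j n] elim
      by (intro nn_integral_mono_AE) (auto simp: AE_measure_pmf_iff)
  qed
qed

lemma annealed_nn_integral_indicator_le_1: "annealed_nn_integral M p (indicator A) j n \<le> 1"
proof -
  interpret S: prob_space "PiM UNIV (\<lambda>_::nat. M)" by (intro prob_space_PiM prob_space_axioms)
  have "annealed_nn_integral M p (indicator A) j n \<le> (\<integral>\<^sup>+xi. 1 \<partial>PiM UNIV (\<lambda>_::nat. M))"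
    unfolding annealed_nn_integral_def
    by (intro nn_integral_mono) (simp add: measure_pmf.emeasure_le_1)
  then show ?thesis by (simp add: S.emeasure_space_1)
qed

lemma annealed_nn_integral_cmult:
  assumes pm: "\<And>i. (\<lambda>e. pmf (p e) i) \<in> borel_measurable M"
  shows "annealed_nn_integral M p (\<lambda>z. c * f z) j n = c * annealed_nn_integral M p f j n"
  unfolding annealed_nn_integral_def
  by (simp add: nn_integral_cmult borel_measurable_nn_integral_quenched_law[OF pm])

lemma annealed_nn_integral_powr_neg_le:
  assumes pm: "\<And>i. (\<lambda>e. pmf (p e) i) \<in> borel_measurable M"
    and good: "AE e in M. 0 \<notin> set_pmf (p e)" and s: "s > 0" and k: "1 \<le> k" "k \<le> j"
  shows "annealed_nn_integral M p (\<lambda>z. ennreal (real z powr (-s))) j n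
     \<le> ennreal (real j powr (-s)) * (\<integral>\<^sup>+e. ennreal (neg_moment (p e) (s / real k) ^ k) \<partial>M) ^ n"
  using \<open>k \<le> j\<close>
proof (induction n arbitrary: j)
  case 0
  then show ?case by (simp add: annealed_nn_integral_0)
next
  case (Suc n)
  let ?f = "\<lambda>z. ennreal (real z powr (-s))"
  let ?\<rho> = "\<lambda>e. ennreal (neg_moment (p e) (s / real k) ^ k)"
  let ?R = "\<integral>\<^sup>+e. ?\<rho> e \<partial>M"
  have "annealed_nn_integral M p ?f j (Suc n)
      = (\<integral>\<^sup>+e. \<integral>\<^sup>+l. annealed_nn_integral M p ?f l n \<partial>measure_pmf (sum_iid (p e) j) \<partial>M)"
    by (rule annealed_nn_integral_Suc[OF pm])
  also have "\<dots> \<le> (\<integral>\<^sup>+e. (\<integral>\<^sup>+l. ?f l \<partial>measure_pmf (sum_iid (p e) j)) * ?R ^ n \<partial>M)"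
  proof (intro nn_integral_mono_AE)
    show "AE e in M. (\<integral>\<^sup>+l. annealed_nn_integral M p ?f l n \<partial>measure_pmf (sum_iid (p e) j))
        \<le> (\<integral>\<^sup>+l. ?f l \<partial>measure_pmf (sum_iid (p e) j)) * ?R ^ n"
      using good
    proof eventually_elim
      case (elim e)
      have "\<And>l. l \<in> set_pmf (sum_iid (p e) j) \<Longrightarrow> annealed_nn_integral M p ?f l n \<le> ?f l * ?R ^ n"
        using Suc set_pmf_sum_iid_ge[OF elim, of j] by force
      then show ?case
        by (subst nn_integral_multc[symmetric]) (auto intro!: nn_integral_mono_AE simp: AE_measure_pmf_iff)
    qed
  qed
  also have "\<dots> \<le> (\<integral>\<^sup>+e. ennreal (real j powr (-s)) * ?R ^ n * ?\<rho> e \<partial>M)"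
  proof (intro nn_integral_mono_AE)
    show "AE e in M. (\<integral>\<^sup>+l. ?f l \<partial>measure_pmf (sum_iid (p e) j)) * ?R ^ n
        \<le> ennreal (real j powr (-s)) * ?R ^ n * ?\<rho> e"
      using good
    proof eventually_elim
      case (elim e)
      show ?case
        using mult_right_mono[OF nn_integral_sum_iid_powr_neg_le[OF elim s k(1) Suc.prems], of "?R ^ n"]
        by (simp add: ac_simps)
    qed
  qed
  also have "\<dots> = ennreal (real j powr (-s)) * ?R ^ n * ?R"
  proof -
    have "(\<lambda>e. neg_moment (p e) (s / real k)) \<in> borel_measurable M"
      using s by (intro borel_measurable_neg_moment pm) auto
    then show ?thesis by (intro nn_integral_cmult) measurable
  qed
  finally show ?case by (simp add: ac_simps)
qed

lemma annealed_nn_integral_diag_ge: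
  assumes pm: "\<And>i. (\<lambda>e. pmf (p e) i) \<in> borel_measurable M"
  shows "(\<integral>\<^sup>+e. ennreal (pmf (p e) 1 ^ k) \<partial>M) ^ n \<le> annealed_nn_integral M p (indicator {k}) k n"
proof (induction n)
  case 0
  then show ?case by (simp add: annealed_nn_integral_0)
next
  case (Suc n)
  let ?A = "annealed_nn_integral M p (indicator {k}) k n"
  let ?R = "\<integral>\<^sup>+e. ennreal (pmf (p e) 1 ^ k) \<partial>M"
  have "?R ^ Suc n \<le> (\<integral>\<^sup>+e. ennreal (pmf (p e) 1 ^ k) \<partial>M) * ?A"
    using Suc by (simp add: mult_left_mono)
  also have "\<dots> = (\<integral>\<^sup>+e. ennreal (pmf (p e) 1 ^ k) * ?A \<partial>M)"
    using pm by (intro nn_integral_multc[symmetric]) measurable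
  also have "\<dots> \<le> (\<integral>\<^sup>+e. ennreal (pmf (sum_iid (p e) k) k) * ?A \<partial>M)"
    by (intro nn_integral_mono mult_right_mono ennreal_leI pmf_sum_iid_diag_ge) auto
  also have "\<dots> \<le> (\<integral>\<^sup>+e. \<integral>\<^sup>+l. annealed_nn_integral M p (indicator {k}) l n
                      \<partial>measure_pmf (sum_iid (p e) k) \<partial>M)"
    by (intro nn_integral_mono pmf_times_le_nn_integral)
  also have "\<dots> = annealed_nn_integral M p (indicator {k}) k (Suc n)"
    by (rule annealed_nn_integral_Suc[OF pm, symmetric])
  finally show ?case .
qed

lemma annealed_prob_eq_annealed_nn_integral:
  assumes pm: "\<And>i. (\<lambda>e. pmf (p e) i) \<in> borel_measurable M"
  shows "annealed_prob M p k n A = enn2real (annealed_nn_integral M p (indicator A) k n)"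
proof -
  have "\<And>Q. ennreal (measure_pmf.prob Q A) = (\<integral>\<^sup>+z. indicator A z \<partial>measure_pmf Q)"
    by (simp add: measure_pmf.emeasure_eq_measure[symmetric])
  moreover have "(\<lambda>xi. measure_pmf.prob (quenched_law p xi k n) A) \<in> borel_measurable (PiM UNIV (\<lambda>_. M))"
    using borel_measurable_nn_integral_quenched_law[OF pm, where f="indicator A" and j=k and n=n]
    by (subst measurable_cong[where g="\<lambda>xi. enn2real (\<integral>\<^sup>+z. indicator A z \<partial>measure_pmf (quenched_law p xi k n))"])
       (auto simp: measure_pmf.emeasure_eq_measure)
  ultimately show ?thesis
    unfolding annealed_prob_def annealed_nn_integral_def by (simp add: integral_eq_nn_integral)
qed

lemma nn_integral_pmf_1_power_eq_gamma_k:
  assumes "\<And>i. (\<lambda>e. pmf (p e) i) \<in> borel_measurable M"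
  shows "(\<integral>\<^sup>+e. ennreal (pmf (p e) 1 ^ k) \<partial>M) = ennreal (gamma_k M p k)"
  unfolding gamma_k_def
  by (intro nn_integral_eq_integral integrable_const_bound[where B=1])
     (use assms in \<open>auto simp: power_le_one pmf_le_1\<close>)

lemma gamma_k_pos:
  assumes pm: "\<And>i. (\<lambda>e. pmf (p e) i) \<in> borel_measurable M"
    and p1: "measure M {e \<in> space M. 0 < pmf (p e) 1} > 0"
  shows "gamma_k M p k > 0"
proof (rule ccontr)
  assume "\<not> gamma_k M p k > 0"
  then have "(\<integral>\<^sup>+e. ennreal (pmf (p e) 1 ^ k) \<partial>M) = 0"
    using gamma_k_nonneg[of M p k] by (subst nn_integral_pmf_1_power_eq_gamma_k[OF pm]) simp
  then have "AE e in M. ennreal (pmf (p e) 1 ^ k) = 0"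
    using pm by (subst (asm) nn_integral_0_iff_AE) measurable
  then have "AE e in M. \<not> 0 < pmf (p e) 1" by eventually_elim simp
  then have "emeasure M {e \<in> space M. 0 < pmf (p e) 1} = 0"
    by (subst (asm) AE_iff_measurable[OF _ refl]) (use pm in auto)
  then show False using p1 by (simp add: measure_def)
qed

lemma annealed_prob_ge_gamma_k_power:
  assumes pm: "\<And>i. (\<lambda>e. pmf (p e) i) \<in> borel_measurable M" and x: "real k \<le> x"
  shows "gamma_k M p k ^ n \<le> annealed_prob M p k n {z. real z \<le> x}"
proof -
  have "ennreal (gamma_k M p k ^ n) = (\<integral>\<^sup>+e. ennreal (pmf (p e) 1 ^ k) \<partial>M) ^ n"
    by (subst nn_integral_pmf_1_power_eq_gamma_k[OF pm]) (simp add: ennreal_power gamma_k_nonneg)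
  also have "\<dots> \<le> annealed_nn_integral M p (indicator {k}) k n"
    by (rule annealed_nn_integral_diag_ge[OF pm])
  also have "\<dots> \<le> annealed_nn_integral M p (indicator {z. real z \<le> x}) k n"
    unfolding annealed_nn_integral_def
    using x by (intro nn_integral_mono) (auto split: split_indicator)
  finally have "ennreal (gamma_k M p k ^ n) \<le> annealed_nn_integral M p (indicator {z. real z \<le> x}) k n" .
  moreover have "annealed_nn_integral M p (indicator {z. real z \<le> x}) k n < top"
    using annealed_nn_integral_indicator_le_1 ennreal_one_less_top by (rule le_less_trans)
  ultimately show ?thesis
    unfolding annealed_prob_eq_annealed_nn_integral[OF pm]
    using enn2real_mono by (fastforce simp: gamma_k_nonneg)
qed

text \<open>Markov's inequality for \<open>Z\<^sub>n\<^sup>-\<^sup>s\<close>.\<close>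

lemma annealed_prob_le_neg_moment_rate:
  assumes pm: "\<And>i. (\<lambda>e. pmf (p e) i) \<in> borel_measurable M"
    and good: "AE e in M. 0 \<notin> set_pmf (p e)" and s: "s > 0" and k: "1 \<le> k" and x: "x > 0"
  shows "annealed_prob M p k n {z. real z \<le> x}
       \<le> x powr s * real k powr (-s) * (\<integral>e. neg_moment (p e) (s / real k) ^ k \<partial>M) ^ n"
proof -
  let ?\<rho> = "\<integral>e. neg_moment (p e) (s / real k) ^ k \<partial>M"
  have \<rho>_nonneg: "0 \<le> ?\<rho>" by (intro integral_nonneg_AE) (auto simp: neg_moment_nonneg)
  have \<rho>: "(\<integral>\<^sup>+e. ennreal (neg_moment (p e) (s / real k) ^ k) \<partial>M) = ennreal ?\<rho>"
    using borel_measurable_neg_moment[OF pm, of "s / real k"] s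
    by (intro nn_integral_eq_integral integrable_const_bound[where B=1])
       (auto simp: neg_moment_nonneg neg_moment_le_1 power_le_one)
  have "annealed_nn_integral M p (indicator {z. real z \<le> x}) k n
      \<le> annealed_nn_integral M p (\<lambda>z. ennreal (x powr s) * ennreal (real z powr (-s))) k n"
  proof (rule annealed_nn_integral_mono[OF good])
    fix z assume "k \<le> z"
    then have "real z \<ge> 1" using k by simp
    have "real z \<le> x \<Longrightarrow> 1 \<le> x powr s * real z powr (-s)"
    proof -
      assume "real z \<le> x"
      then have "1 \<le> (x / real z) powr s" using \<open>real z \<ge> 1\<close> s by (intro ge_one_powr_ge_zero) auto
      also have "\<dots> = x powr s * real z powr (-s)"
        using \<open>real z \<ge> 1\<close> x by (subst powr_divide) (simp_all add: powr_minus divide_inverse)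
      finally show ?thesis .
    qed
    then show "indicator {z. real z \<le> x} z \<le> ennreal (x powr s) * ennreal (real z powr (-s))"
      by (simp add: ennreal_mult''[symmetric] split: split_indicator)
  qed
  also have "\<dots> = ennreal (x powr s) * annealed_nn_integral M p (\<lambda>z. ennreal (real z powr (-s))) k n"
    by (rule annealed_nn_integral_cmult[OF pm])
  also have "\<dots> \<le> ennreal (x powr s) * (ennreal (real k powr (-s)) * ennreal ?\<rho> ^ n)"
    using annealed_nn_integral_powr_neg_le[OF pm good s k order.refl, of n] \<rho>
    by (intro mult_left_mono) auto
  also have "\<dots> = ennreal (x powr s * real k powr (-s) * ?\<rho> ^ n)"
    using \<rho>_nonneg by (simp add: ennreal_mult'' ennreal_power ac_simps)
  finally show ?thesis
    unfolding annealed_prob_eq_annealed_nn_integral[OF pm] using \<rho>_nonneg by (intro enn2real_leI) auto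
qed

end

section \<open>Exponential rates\<close>

lemma nat_powr_neg_tendsto_indicator:
  assumes k: "k \<ge> (1::nat)"
  shows "(\<lambda>m. real i powr (-(real m / real k))) \<longlonglongrightarrow> indicator {1} i"
proof (cases "i \<le> 1")
  case True
  then consider "i = 0" | "i = 1" by linarith
  then show ?thesis by cases auto
next
  case False
  define c where "c = real i powr (-1 / real k)"
  have c: "0 < c" "c < 1"
    using False k unfolding c_def by (auto intro: powr_less_one)
  have "real i powr (-(real m / real k)) = c ^ m" for m
    using c by (simp add: c_def powr_powr powr_realpow[symmetric])
  moreover have "(\<lambda>m. c ^ m) \<longlonglongrightarrow> 0" using c by (intro LIMSEQ_power_zero) auto
  ultimately show ?thesis using False by simp
qed

lemma neg_moment_tendsto_pmf_1:
  assumes "k \<ge> (1::nat)"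
  shows "(\<lambda>m. neg_moment q (real m / real k)) \<longlonglongrightarrow> pmf q 1"
proof -
  have "(\<lambda>m. measure_pmf.expectation q (\<lambda>i. real i powr (-(real m / real k))))
          \<longlonglongrightarrow> measure_pmf.expectation q (indicator {1})"
    using nat_powr_neg_tendsto_indicator[OF assms]
    by (intro integral_dominated_convergence[where w="\<lambda>_. 1"]) (auto simp: nat_powr_neg_le_1)
  then show ?thesis by (simp add: neg_moment_def measure_pmf_single)
qed

lemma (in prob_space) neg_moment_rate_tendsto_gamma_k:
  assumes pm: "\<And>i. (\<lambda>e. pmf (p e) i) \<in> borel_measurable M" and k: "k \<ge> (1::nat)"
  shows "(\<lambda>m. \<integral>e. neg_moment (p e) (real m / real k) ^ k \<partial>M) \<longlonglongrightarrow> gamma_k M p k"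
  unfolding gamma_k_def
proof (rule integral_dominated_convergence[where w="\<lambda>_. 1"])
  show "AE e in M. (\<lambda>m. neg_moment (p e) (real m / real k) ^ k) \<longlonglongrightarrow> pmf (p e) 1 ^ k"
    using neg_moment_tendsto_pmf_1[OF k] by (auto intro!: tendsto_power)
  show "\<And>m. (\<lambda>e. neg_moment (p e) (real m / real k) ^ k) \<in> borel_measurable M"
    using borel_measurable_neg_moment[OF pm] by measurable
qed (use pm in \<open>auto simp: neg_moment_nonneg neg_moment_le_1 power_le_one\<close>)

lemma ln_rate_tendsto_squeeze:
  fixes a b \<rho> :: "nat \<Rightarrow> real" and \<gamma> :: real
  assumes \<gamma>: "\<gamma> > 0"
    and lower: "\<forall>\<^sub>F n in sequentially. \<gamma> ^ n \<le> a n"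
    and upper: "\<And>m n. m \<ge> 1 \<Longrightarrow> a n \<le> b n powr real m * \<rho> m ^ n"
    and \<rho>: "\<rho> \<longlonglongrightarrow> \<gamma>"
    and b_pos: "\<And>n. b n > 0"
    and b_subexp: "\<And>\<theta>. \<theta> > 0 \<Longrightarrow> (\<lambda>n. b n / exp (\<theta> * real n)) \<longlonglongrightarrow> 0"
  shows "(\<lambda>n. ln (a n) / real n) \<longlonglongrightarrow> ln \<gamma>"
proof (rule tendstoI)
  fix \<epsilon> :: real assume \<epsilon>: "\<epsilon> > 0"
  have "(\<lambda>m. ln (\<rho> m)) \<longlonglongrightarrow> ln \<gamma>" using \<rho> \<gamma> by (intro tendsto_ln) auto
  then have "\<forall>\<^sub>F m in sequentially. ln (\<rho> m) < ln \<gamma> + \<epsilon> / 2"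
    using \<epsilon> by (intro order_tendstoD) auto
  moreover have "\<forall>\<^sub>F m in sequentially. \<rho> m > 0" using \<rho> \<gamma> by (intro order_tendstoD) auto
  ultimately have "\<forall>\<^sub>F m in sequentially. ln (\<rho> m) < ln \<gamma> + \<epsilon> / 2 \<and> \<rho> m > 0 \<and> m \<ge> 1"
    by (intro eventually_conj eventually_ge_at_top)
  then obtain N where "\<forall>m\<ge>N. ln (\<rho> m) < ln \<gamma> + \<epsilon> / 2 \<and> \<rho> m > 0 \<and> m \<ge> 1"
    unfolding eventually_sequentially by blast
  then obtain m where m: "m \<ge> 1" and \<rho>_m: "ln (\<rho> m) < ln \<gamma> + \<epsilon> / 2" "\<rho> m > 0"
    by (meson order.refl)
  define \<theta> where "\<theta> = \<epsilon> / (4 * real m)"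
  have "\<theta> > 0" using \<epsilon> m by (simp add: \<theta>_def)
  have "\<forall>\<^sub>F n in sequentially. b n / exp (\<theta> * real n) < 1"
    using b_subexp[OF \<open>\<theta> > 0\<close>] by (intro order_tendstoD) auto
  then have ln_b: "\<forall>\<^sub>F n in sequentially. ln (b n) < \<theta> * real n"
  proof eventually_elim
    case (elim n)
    then have "b n < exp (\<theta> * real n)" by (simp add: divide_less_eq)
    then show ?case using b_pos[of n] by (metis ln_exp ln_less_cancel_iff exp_gt_zero)
  qed
  show "\<forall>\<^sub>F n in sequentially. dist (ln (a n) / real n) (ln \<gamma>) < \<epsilon>"
    using lower ln_b eventually_gt_at_top[of 0]
  proof eventually_elim
    case (elim n)
    have a_pos: "a n > 0" using elim(1) \<gamma> by (meson less_le_trans zero_less_power)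
    have "real n * ln \<gamma> \<le> ln (a n)"
      using elim(1) \<gamma> by (metis ln_mono ln_realpow zero_less_power)
    then have lo: "ln \<gamma> \<le> ln (a n) / real n" using elim by (simp add: le_divide_eq mult.commute)
    have "ln (a n) \<le> ln (b n powr real m * \<rho> m ^ n)"
      using a_pos upper[OF m] by (intro ln_mono) auto
    also have "\<dots> = real m * ln (b n) + real n * ln (\<rho> m)"
      using b_pos[of n] \<rho>_m by (simp add: ln_mult ln_powr ln_realpow)
    also have "\<dots> \<le> real n * (real m * \<theta> + ln (\<rho> m))"
      using elim(2) mult_left_mono[of "ln (b n)" "\<theta> * real n" "real m"] by (simp add: algebra_simps)
    finally have "ln (a n) / real n \<le> \<epsilon> / 4 + ln (\<rho> m)"
      using elim m by (simp add: divide_le_eq \<theta>_def mult.commute)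
    then show ?case using lo \<rho>_m \<epsilon> by (simp add: dist_real_def)
  qed
qed

theorem corollary2p4:
  fixes M :: "'e measure" and p :: "'e \<Rightarrow> nat pmf"
    and k :: nat and r \<epsilon> :: real and kn :: "nat \<Rightarrow> real"
  assumes M: "prob_space M"
    and p_meas: "\<And>i. (\<lambda>e. pmf (p e) i) \<in> borel_measurable M"
    and p0: "AE e in M. pmf (p e) 0 = 0"
    and mean_fin: "AE e in M. integrable (measure_pmf (p e)) real"
    and logm_int: "integrable M (\<lambda>e. ln (mean_offspring p e))"
    and logm_pos: "(\<integral>e. ln (mean_offspring p e) \<partial>M) > 0"
    and LlogL: "(\<integral>\<^sup>+ e. (\<integral>\<^sup>+ i. ennreal (real i / mean_offspring p e * max 0 (ln (real i))) \<partial>measure_pmf (p e)) \<partial>M) < \<infinity>"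
    and p1: "measure M {e \<in> space M. 0 < pmf (p e) 1} > 0"
    and r_pos: "r > 0"
    and r_def: "(\<integral>e. mean_offspring p e powr (- r) \<partial>M) = gamma_k M p k"
    and k: "k \<ge> 1"
    and eps: "\<epsilon> > 0"
    and moment: "integrable M (\<lambda>e. mean_offspring p e powr (r + \<epsilon>))"
    and kn_pos: "\<And>n. kn n > 0"
    and kn_inf: "filterlim kn at_top sequentially"
    and kn_sub: "\<And>\<theta>. \<theta> > 0 \<Longrightarrow> (\<lambda>n. kn n / exp (\<theta> * real n)) \<longlonglongrightarrow> 0"
  shows "(\<lambda>n. ln (annealed_prob M p k n {z. real z \<le> kn n}) / real n)
           \<longlonglongrightarrow> ln (gamma_k M p k)"
proof -
  interpret prob_space M by (rule M)
  have good: "AE e in M. 0 \<notin> set_pmf (p e)"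
    using p0 by eventually_elim (simp add: set_pmf_iff)
  define \<rho> where "\<rho> m = (\<integral>e. neg_moment (p e) (real m / real k) ^ k \<partial>M)" for m :: nat
  show ?thesis
  proof (rule ln_rate_tendsto_squeeze)
    show "gamma_k M p k > 0" by (rule gamma_k_pos[OF p_meas p1])
    show "\<forall>\<^sub>F n in sequentially. gamma_k M p k ^ n \<le> annealed_prob M p k n {z. real z \<le> kn n}"
      using kn_inf unfolding filterlim_at_top
      by (auto elim!: eventually_mono intro: annealed_prob_ge_gamma_k_power[OF p_meas])
    show "\<rho> \<longlonglongrightarrow> gamma_k M p k"
      unfolding \<rho>_def by (rule neg_moment_rate_tendsto_gamma_k[OF p_meas k])
    show "annealed_prob M p k n {z. real z \<le> kn n} \<le> kn n powr real m * \<rho> m ^ n" if "m \<ge> 1" for m n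
    proof -
      have "annealed_prob M p k n {z. real z \<le> kn n} \<le> kn n powr real m * real k powr (- real m) * \<rho> m ^ n"
        unfolding \<rho>_def using that k kn_pos by (intro annealed_prob_le_neg_moment_rate[OF p_meas good]) auto
      also have "\<dots> \<le> kn n powr real m * \<rho> m ^ n"
        using nat_powr_neg_le_1[of "real m" k]
        by (intro mult_right_mono mult_left_le) (auto simp: \<rho>_def integral_nonneg_AE neg_moment_nonneg)
      finally show ?thesis .
    qed
  qed (use kn_pos kn_sub in auto)
qed

end
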